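(* Let $0<a<D$. There exists $M>0$ such that for every bounded set $B\subset\mathbb{R}_+^3$ there exists $t_B>0$ with the following property: for every $\omega\in\Omega$ and every nonnegative global solution $(s(t),m_1(t),m_2(t))$, $t\ge0$, of the random chemostat system $$s'(t)=(D+\psi(\xi^*(\theta_t\omega)))(s_{\mathrm{in}}-\alpha s(t))-c\mu(s(t))(m_1(t)+m_2(t))+rd\,m_1(t),$$ $$m_1'(t)=m_1(t)\big(-d-\alpha(D+\psi(\xi^*(\theta_t\omega)))+g\mu(s(t))-r_1m_1(t)-r_2m_2(t)-\alpha_1\big)+\alpha_2m_2(t),$$ $$m_2'(t)=m_2(t)\big(-d+g\mu(s(t))-r_1m_1(t)-r_2m_2(t)-\alpha_2\big)+\alpha_1m_1(t)$$ with initial condition $(s(0),m_1(0),m_2(0))\in B$, one has $$g\,s(t)+c\,(m_1(t)+m_2(t))\le M\quad\text{for all } t\ge t_B.$$ In particular, the system has an absorbing set independent of $\omega$.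
   Context: $\mathbb{R}_+^3=\{(x,y,z)\in\mathbb{R}^3: x,y,z\ge0\}$. Let $\Omega$ be the set of continuous functions $\omega:\mathbb{R}\to\mathbb{R}$ with $\omega(0)=0$, with Borel $\sigma$-algebra and Wiener measure, and $\theta_t\omega(\cdot)=\omega(\cdot+t)-\omega(t)$ the Wiener shift. The Ornstein–Uhlenbeck process is $\xi^*(\theta_t\omega)=-\int_{-\infty}^0 e^{s}\,\theta_t\omega(s)\,ds$. For a constant $a>0$, $\psi(\xi)=\frac{2a}{\pi}\arctan(\xi)$. Parameters: $D>0$, $s_{\mathrm{in}}>0$, $\alpha>0$, $c>0$, $g\in(0,c]$, $r\in(0,1)$, $d>0$, $\alpha_1,\alpha_2\ge0$, $r_1,r_2\ge0$. The consumption function $\mu:[0,+\infty)\to[0,+\infty)$ is continuous, $\mu(0)=0$, $\mu(x)>0$ for $x>0$, and $\mu(x)\le1$ for all $x\ge0$. *)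

theory Defs
  imports "HOL-Analysis.Analysis"
begin

definition Wiener_Omega :: "(real \<Rightarrow> real) set" where
  "Wiener_Omega = {\<omega>. continuous_on UNIV \<omega> \<and> \<omega> 0 = 0}"

definition wiener_shift :: "real \<Rightarrow> (real \<Rightarrow> real) \<Rightarrow> (real \<Rightarrow> real)" where
  "wiener_shift t \<omega> = (\<lambda>s. \<omega> (s + t) - \<omega> t)"

definition OU :: "(real \<Rightarrow> real) \<Rightarrow> real" where
  "OU \<omega> = - integral {..0} (\<lambda>s. exp s * \<omega> s)"

definition psi :: "real \<Rightarrow> real \<Rightarrow> real" where
  "psi a \<xi> = 2 * a / pi * arctan \<xi>"

definition chemostat_solution ::
  "real \<Rightarrow> real \<Rightarrow> real \<Rightarrow> real \<Rightarrow> real \<Rightarrow> real \<Rightarrow> real \<Rightarrow> real \<Rightarrow> real \<Rightarrow> real \<Rightarrow> real \<Rightarrow> real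
   \<Rightarrow> (real \<Rightarrow> real) \<Rightarrow> (real \<Rightarrow> real) \<Rightarrow> (real \<Rightarrow> real) \<Rightarrow> (real \<Rightarrow> real) \<Rightarrow> (real \<Rightarrow> real) \<Rightarrow> bool" where
  "chemostat_solution D s_in \<alpha> c g r d \<alpha>\<^sub>1 \<alpha>\<^sub>2 r\<^sub>1 r\<^sub>2 a \<mu> \<omega> s m\<^sub>1 m\<^sub>2 \<longleftrightarrow>
     (\<forall>t\<ge>0. s t \<ge> 0 \<and> m\<^sub>1 t \<ge> 0 \<and> m\<^sub>2 t \<ge> 0) \<and>
     (\<forall>t\<ge>0.
        (let Dt = D + psi a (OU (wiener_shift t \<omega>)) in
         (s has_real_derivative
            (Dt * (s_in - \<alpha> * s t) - c * \<mu> (s t) * (m\<^sub>1 t + m\<^sub>2 t) + r * d * m\<^sub>1 t)) (at t within {0..}) \<and>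
         (m\<^sub>1 has_real_derivative
            (m\<^sub>1 t * (- d - \<alpha> * Dt + g * \<mu> (s t) - r\<^sub>1 * m\<^sub>1 t - r\<^sub>2 * m\<^sub>2 t - \<alpha>\<^sub>1) + \<alpha>\<^sub>2 * m\<^sub>2 t))
            (at t within {0..}) \<and>
         (m\<^sub>2 has_real_derivative
            (m\<^sub>2 t * (- d + g * \<mu> (s t) - r\<^sub>1 * m\<^sub>1 t - r\<^sub>2 * m\<^sub>2 t - \<alpha>\<^sub>2) + \<alpha>\<^sub>1 * m\<^sub>1 t))
            (at t within {0..})))"

end

theory Submission
  imports Defs
begin

text \<open>
  The weighted total mass \<open>V = g s + c (m\<^sub>1 + m\<^sub>2)\<close> is a Lyapunov function uniformly in \<open>\<omega>\<close>.
  In \<open>V'\<close> the consumption terms \<open>c \<mu>(s) (m\<^sub>1 + m\<^sub>2)\<close> and the switching terms \<open>\<alpha>\<^sub>1 m\<^sub>1\<close>, \<open>\<alpha>\<^sub>2 m\<^sub>2\<close>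
  cancel, and the random dilution rate \<open>D + \<psi>(\<xi>*(\<theta>\<^sub>t\<omega>))\<close> stays in \<open>[D - a, D + a]\<close>; hence
  \<open>V' \<le> K - \<lambda> V\<close> with \<open>K = g (D + a) s\<^sub>i\<^sub>n\<close> and \<open>\<lambda> = min (\<alpha> (D - a)) (d (1 - r)) > 0\<close>.
  Comparing with the linear equation gives \<open>V t \<le> K/\<lambda> + exp (-\<lambda> t) (V 0 - K/\<lambda>)\<close>, so \<open>M = K/\<lambda> + 1\<close>
  works once \<open>exp (-\<lambda> t)\<close> times a bound for \<open>V\<close> on \<open>B\<close> is below 1. In particular no property
  of \<open>\<mu>\<close> or of the noise path \<open>\<omega>\<close> is needed.
\<close>

lemma has_real_derivative_nonpos_imp_decreasing_atLeast:
  fixes f :: "real \<Rightarrow> real"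
  assumes deriv: "\<And>x. a \<le> x \<Longrightarrow> \<exists>y. (f has_real_derivative y) (at x within {a..}) \<and> y \<le> 0"
    and "a \<le> t"
  shows "f t \<le> f a"
proof (rule DERIV_nonpos_imp_decreasing_open[OF \<open>a \<le> t\<close>])
  fix x assume x: "a < x" "x < t"
  then have "at x within {a..} = at x"
    by (intro at_within_interior) auto
  then show "\<exists>y. DERIV f x :> y \<and> y \<le> 0"
    using deriv[of x] x by auto
next
  have "continuous (at x within {a..t}) f" if "x \<in> {a..t}" for x
  proof (rule continuous_within_subset)
    show "continuous (at x within {a..}) f"
      using deriv[of x] that DERIV_continuous by auto
  qed auto
  then show "continuous_on {a..t} f"
    using continuous_on_eq_continuous_within by blast
qed

lemma linear_differential_inequality:
  fixes f :: "real \<Rightarrow> real"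
  assumes "lam \<noteq> 0"
    and deriv: "\<And>x. 0 \<le> x \<Longrightarrow>
      \<exists>y. (f has_real_derivative y) (at x within {0..}) \<and> y \<le> K - lam * f x"
    and "0 \<le> t"
  shows "f t \<le> K / lam + exp (- lam * t) * (f 0 - K / lam)"
proof -
  define W where "W x = exp (lam * x) * (f x - K / lam)" for x
  have "\<exists>w. (W has_real_derivative w) (at x within {0..}) \<and> w \<le> 0" if x: "0 \<le> x" for x
  proof -
    obtain y where y: "(f has_real_derivative y) (at x within {0..})" "y \<le> K - lam * f x"
      using deriv[OF x] by blast
    have "(W has_real_derivative exp (lam * x) * (y + lam * f x - K)) (at x within {0..})"
      unfolding W_def using y(1) \<open>lam \<noteq> 0\<close>
      by (auto intro!: derivative_eq_intros simp: field_simps)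
    moreover have "exp (lam * x) * (y + lam * f x - K) \<le> 0"
      using y(2) by (intro mult_nonneg_nonpos) auto
    ultimately show ?thesis by blast
  qed
  then have "W t \<le> W 0"
    using \<open>0 \<le> t\<close> by (rule has_real_derivative_nonpos_imp_decreasing_atLeast)
  then have "exp (lam * t) * (f t - K / lam) \<le> f 0 - K / lam"
    by (simp add: W_def)
  then show ?thesis
    by (simp add: exp_minus field_simps)
qed

lemma abs_psi_le:
  assumes "0 \<le> a"
  shows "\<bar>psi a \<xi>\<bar> \<le> a"
proof -
  have "2 * a / pi * \<bar>arctan \<xi>\<bar> \<le> 2 * a / pi * (pi / 2)"
    using arctan_bounded[of \<xi>] assms by (intro mult_left_mono) auto
  then show ?thesis
    by (simp add: psi_def abs_mult assms)
qed

lemma exp_decay_eventually_le: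
  fixes lam R \<epsilon> :: real
  assumes "0 < lam" "0 < \<epsilon>"
  shows "\<exists>T>0. \<forall>t\<ge>T. R * exp (- lam * t) \<le> \<epsilon>"
proof -
  have "filterlim (\<lambda>t. - lam * t) at_bot at_top"
    using assms(1) by (intro filterlim_tendsto_neg_mult_at_bot[OF tendsto_const _ filterlim_ident]) auto
  then have "((\<lambda>t. R * exp (- lam * t)) \<longlongrightarrow> R * 0) at_top"
    by (intro tendsto_mult tendsto_const filterlim_compose[OF exp_at_bot])
  then have "eventually (\<lambda>t. R * exp (- lam * t) < \<epsilon>) at_top"
    using assms(2) by (intro order_tendstoD) auto
  then obtain N where "\<forall>t\<ge>N. R * exp (- lam * t) < \<epsilon>"
    by (auto simp: eventually_at_top_linorder)
  then show ?thesis
    by (intro exI[of _ "max 1 N"]) auto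
qed

lemma chemostat_weighted_mass_derivative:
  assumes sol: "chemostat_solution D s_in \<alpha> c g r d \<alpha>\<^sub>1 \<alpha>\<^sub>2 r\<^sub>1 r\<^sub>2 a \<mu> \<omega> s m\<^sub>1 m\<^sub>2"
    and "0 \<le> t"
  defines "\<delta> \<equiv> D + psi a (OU (wiener_shift t \<omega>))"
  shows "((\<lambda>t. g * s t + c * (m\<^sub>1 t + m\<^sub>2 t)) has_real_derivative
      g * \<delta> * s_in - g * \<alpha> * \<delta> * s t + g * r * d * m\<^sub>1 t - c * d * (m\<^sub>1 t + m\<^sub>2 t)
      - c * \<alpha> * \<delta> * m\<^sub>1 t - c * (r\<^sub>1 * m\<^sub>1 t + r\<^sub>2 * m\<^sub>2 t) * (m\<^sub>1 t + m\<^sub>2 t)) (at t within {0..})"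
proof -
  have ds: "(s has_real_derivative \<delta> * (s_in - \<alpha> * s t) - c * \<mu> (s t) * (m\<^sub>1 t + m\<^sub>2 t)
      + r * d * m\<^sub>1 t) (at t within {0..})"
    and dm\<^sub>1: "(m\<^sub>1 has_real_derivative m\<^sub>1 t * (- d - \<alpha> * \<delta> + g * \<mu> (s t) - r\<^sub>1 * m\<^sub>1 t
      - r\<^sub>2 * m\<^sub>2 t - \<alpha>\<^sub>1) + \<alpha>\<^sub>2 * m\<^sub>2 t) (at t within {0..})"
    and dm\<^sub>2: "(m\<^sub>2 has_real_derivative m\<^sub>2 t * (- d + g * \<mu> (s t) - r\<^sub>1 * m\<^sub>1 t
      - r\<^sub>2 * m\<^sub>2 t - \<alpha>\<^sub>2) + \<alpha>\<^sub>1 * m\<^sub>1 t) (at t within {0..})"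
    using sol \<open>0 \<le> t\<close> by (auto simp: chemostat_solution_def Let_def \<delta>_def)
  then show ?thesis
    by (auto intro!: derivative_eq_intros simp: algebra_simps)
qed

context
  fixes D s_in \<alpha> c g r d r\<^sub>1 r\<^sub>2 a lam :: real
  assumes params: "0 \<le> a" "a \<le> D" "0 \<le> s_in" "0 \<le> \<alpha>" "0 \<le> g" "g \<le> c" "0 \<le> r" "0 \<le> d"
      "0 \<le> r\<^sub>1" "0 \<le> r\<^sub>2"
    and rate: "lam \<le> \<alpha> * (D - a)" "lam \<le> d * (1 - r)"
begin

lemma weighted_mass_rate_le:
  assumes "0 \<le> x" "0 \<le> y\<^sub>1" "0 \<le> y\<^sub>2" and \<delta>: "D - a \<le> \<delta>" "\<delta> \<le> D + a"
  shows "g * \<delta> * s_in - g * \<alpha> * \<delta> * x + g * r * d * y\<^sub>1 - c * d * (y\<^sub>1 + y\<^sub>2)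
      - c * \<alpha> * \<delta> * y\<^sub>1 - c * (r\<^sub>1 * y\<^sub>1 + r\<^sub>2 * y\<^sub>2) * (y\<^sub>1 + y\<^sub>2)
    \<le> g * (D + a) * s_in - lam * (g * x + c * (y\<^sub>1 + y\<^sub>2))"
proof -
  have "g * \<delta> * s_in \<le> g * (D + a) * s_in"
    using \<delta> params by (intro mult_right_mono mult_left_mono) auto
  moreover have "lam * (g * x) \<le> g * \<alpha> * \<delta> * x"
  proof -
    have "lam * (g * x) \<le> \<alpha> * (D - a) * (g * x)"
      using rate assms params by (intro mult_right_mono) auto
    also have "\<dots> \<le> \<alpha> * \<delta> * (g * x)"
      using assms params by (intro mult_right_mono mult_left_mono) auto
    finally show ?thesis by (simp add: algebra_simps)
  qed
  moreover have "g * r * d * y\<^sub>1 \<le> c * r * d * y\<^sub>1"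
    using assms params by (intro mult_right_mono) auto
  moreover have "lam * (c * (y\<^sub>1 + y\<^sub>2)) \<le> c * d * (y\<^sub>1 + y\<^sub>2) - c * r * d * y\<^sub>1"
  proof -
    have "lam * (c * (y\<^sub>1 + y\<^sub>2)) \<le> d * (1 - r) * (c * (y\<^sub>1 + y\<^sub>2))"
      using rate assms params by (intro mult_right_mono) auto
    also have "\<dots> \<le> c * d * (y\<^sub>1 + y\<^sub>2) - c * r * d * y\<^sub>1"
      using assms params by (simp add: algebra_simps)
    finally show ?thesis .
  qed
  moreover have "0 \<le> c * \<alpha> * \<delta> * y\<^sub>1" "0 \<le> c * (r\<^sub>1 * y\<^sub>1 + r\<^sub>2 * y\<^sub>2) * (y\<^sub>1 + y\<^sub>2)"
    using assms params by auto
  ultimately show ?thesis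
    by (simp add: algebra_simps)
qed

lemma chemostat_weighted_mass_le:
  assumes sol: "chemostat_solution D s_in \<alpha> c g r d \<alpha>\<^sub>1 \<alpha>\<^sub>2 r\<^sub>1 r\<^sub>2 a \<mu> \<omega> s m\<^sub>1 m\<^sub>2"
    and "lam \<noteq> 0" "0 \<le> t"
  defines "K \<equiv> g * (D + a) * s_in"
  shows "g * s t + c * (m\<^sub>1 t + m\<^sub>2 t)
    \<le> K / lam + exp (- lam * t) * (g * s 0 + c * (m\<^sub>1 0 + m\<^sub>2 0) - K / lam)"
proof (rule linear_differential_inequality[OF \<open>lam \<noteq> 0\<close> _ \<open>0 \<le> t\<close>])
  fix x :: real
  assume "0 \<le> x"
  have nonneg: "0 \<le> s x" "0 \<le> m\<^sub>1 x" "0 \<le> m\<^sub>2 x"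
    using sol \<open>0 \<le> x\<close> by (auto simp: chemostat_solution_def)
  have dilution: "D - a \<le> D + psi a (OU (wiener_shift x \<omega>))" "D + psi a (OU (wiener_shift x \<omega>)) \<le> D + a"
    using abs_psi_le[of a "OU (wiener_shift x \<omega>)"] params by auto
  show "\<exists>y. ((\<lambda>t. g * s t + c * (m\<^sub>1 t + m\<^sub>2 t)) has_real_derivative y) (at x within {0..}) \<and>
      y \<le> K - lam * (g * s x + c * (m\<^sub>1 x + m\<^sub>2 x))"
    unfolding K_def
    using chemostat_weighted_mass_derivative[OF sol \<open>0 \<le> x\<close>] weighted_mass_rate_le[OF nonneg dilution]
    by blast
qed

lemma chemostat_absorbing_time:
  assumes "0 < lam" "bounded B"
  shows "\<exists>tB>0. \<forall>\<omega> s m\<^sub>1 m\<^sub>2.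
    chemostat_solution D s_in \<alpha> c g r d \<alpha>\<^sub>1 \<alpha>\<^sub>2 r\<^sub>1 r\<^sub>2 a \<mu> \<omega> s m\<^sub>1 m\<^sub>2 \<and> (s 0, m\<^sub>1 0, m\<^sub>2 0) \<in> B \<longrightarrow>
    (\<forall>t\<ge>tB. g * s t + c * (m\<^sub>1 t + m\<^sub>2 t) \<le> g * (D + a) * s_in / lam + 1)"
proof -
  define K where "K = g * (D + a) * s_in"
  have "0 \<le> K / lam"
    using params \<open>0 < lam\<close> by (simp add: K_def)
  have "bounded ((\<lambda>p. g * fst p + c * (fst (snd p) + snd (snd p))) ` B)"
    using \<open>bounded B\<close> by (intro bounded_linear_image) (auto intro!: bounded_linear_intros)
  then obtain R where R: "\<And>p. p \<in> B \<Longrightarrow> \<bar>g * fst p + c * (fst (snd p) + snd (snd p))\<bar> \<le> R"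
    unfolding bounded_iff by auto
  obtain T where "0 < T" and T: "\<And>t. T \<le> t \<Longrightarrow> R * exp (- lam * t) \<le> 1"
    using exp_decay_eventually_le[OF \<open>0 < lam\<close> zero_less_one] by blast
  have "g * s t + c * (m\<^sub>1 t + m\<^sub>2 t) \<le> K / lam + 1"
    if sol: "chemostat_solution D s_in \<alpha> c g r d \<alpha>\<^sub>1 \<alpha>\<^sub>2 r\<^sub>1 r\<^sub>2 a \<mu> \<omega> s m\<^sub>1 m\<^sub>2"
      and "(s 0, m\<^sub>1 0, m\<^sub>2 0) \<in> B" "T \<le> t" for \<omega> s m\<^sub>1 m\<^sub>2 t
  proof -
    have "g * s t + c * (m\<^sub>1 t + m\<^sub>2 t)
        \<le> K / lam + exp (- lam * t) * (g * s 0 + c * (m\<^sub>1 0 + m\<^sub>2 0) - K / lam)"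
      unfolding K_def using \<open>0 < lam\<close> \<open>0 < T\<close> \<open>T \<le> t\<close>
      by (intro chemostat_weighted_mass_le[OF sol]) auto
    also have "\<dots> \<le> K / lam + R * exp (- lam * t)"
      using R[OF that(2)] \<open>0 \<le> K / lam\<close> by (simp add: mult.commute mult_left_mono)
    also have "\<dots> \<le> K / lam + 1"
      using T[OF \<open>T \<le> t\<close>] by simp
    finally show ?thesis .
  qed
  then show ?thesis
    using \<open>0 < T\<close> unfolding K_def by blast
qed

end

theorem theorem3p2:
  fixes D s_in \<alpha> c g r d \<alpha>\<^sub>1 \<alpha>\<^sub>2 r\<^sub>1 r\<^sub>2 a :: real
    and \<mu> :: "real \<Rightarrow> real"
  assumes "D > 0" "s_in > 0" "\<alpha> > 0" "c > 0" "0 < g" "g \<le> c" "0 < r" "r < 1" "d > 0"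
    "\<alpha>\<^sub>1 \<ge> 0" "\<alpha>\<^sub>2 \<ge> 0" "r\<^sub>1 \<ge> 0" "r\<^sub>2 \<ge> 0"
    and "0 < a" "a < D"
    and "continuous_on {0..} \<mu>" "\<mu> 0 = 0" "\<And>x. x > 0 \<Longrightarrow> \<mu> x > 0"
    "\<And>x. x \<ge> 0 \<Longrightarrow> \<mu> x \<ge> 0" "\<And>x. x \<ge> 0 \<Longrightarrow> \<mu> x \<le> 1"
  shows "\<exists>M>0. \<forall>B :: (real \<times> real \<times> real) set.
           bounded B \<and> B \<subseteq> {(x, y, z). x \<ge> 0 \<and> y \<ge> 0 \<and> z \<ge> 0} \<longrightarrow>
           (\<exists>tB>0. \<forall>\<omega>\<in>Wiener_Omega. \<forall>s m\<^sub>1 m\<^sub>2.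
              chemostat_solution D s_in \<alpha> c g r d \<alpha>\<^sub>1 \<alpha>\<^sub>2 r\<^sub>1 r\<^sub>2 a \<mu> \<omega> s m\<^sub>1 m\<^sub>2 \<and>
              (s 0, m\<^sub>1 0, m\<^sub>2 0) \<in> B \<longrightarrow>
              (\<forall>t\<ge>tB. g * s t + c * (m\<^sub>1 t + m\<^sub>2 t) \<le> M))"
proof -
  define lam where "lam = min (\<alpha> * (D - a)) (d * (1 - r))"
  define M where "M = g * (D + a) * s_in / lam + 1"
  have params: "0 \<le> a" "a \<le> D" "0 \<le> s_in" "0 \<le> \<alpha>" "0 \<le> g" "g \<le> c" "0 \<le> r" "0 \<le> d"
      "0 \<le> r\<^sub>1" "0 \<le> r\<^sub>2"
    using assms by auto
  have lam: "0 < lam" "lam \<le> \<alpha> * (D - a)" "lam \<le> d * (1 - r)"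
    using assms by (auto simp: lam_def)
  have "0 < M"
    using assms lam by (simp add: M_def add_nonneg_pos)
  moreover have "\<exists>tB>0. \<forall>\<omega>\<in>Wiener_Omega. \<forall>s m\<^sub>1 m\<^sub>2.
      chemostat_solution D s_in \<alpha> c g r d \<alpha>\<^sub>1 \<alpha>\<^sub>2 r\<^sub>1 r\<^sub>2 a \<mu> \<omega> s m\<^sub>1 m\<^sub>2 \<and> (s 0, m\<^sub>1 0, m\<^sub>2 0) \<in> B \<longrightarrow>
      (\<forall>t\<ge>tB. g * s t + c * (m\<^sub>1 t + m\<^sub>2 t) \<le> M)"
    if "bounded B" for B :: "(real \<times> real \<times> real) set"
    using chemostat_absorbing_time[where \<alpha>\<^sub>1 = \<alpha>\<^sub>1 and \<alpha>\<^sub>2 = \<alpha>\<^sub>2 and \<mu> = \<mu>, OF params lam(2,3) lam(1) that]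
    unfolding M_def by blast
  ultimately show ?thesis
    by blast
qed

end
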